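(* In the signal design problem described in the context, define the congestion level $\chi=\frac{\min\{Vk_0,C\}}{\min\{C,(K-k_0)W\}}$. Then the optimal cycle lengths are: (1) Very sparse traffic, $\chi\in[0,\pi_0)$: multiple optimal cycle lengths $T^*=\frac1{j_1}\frac LV$ for positive integers $j_1$ with $Vk_0\le(1-\frac{2\delta}{T^*})\pi_0C$. (2) Sparse traffic, $\chi\in[\pi_0,1)$: a unique optimal cycle length $T^*=\chi\frac{L}{\pi_0V}+2\delta$. (3) Critical traffic, $\chi=1$: a unique optimal cycle length $T^*=\infty$. (4) Dense traffic, $\chi\in(1,\frac1{\pi_0}]$: a unique optimal cycle length $T^*=\frac1\chi\frac{L}{\pi_0W}+2\delta$. (5) Very dense traffic, $\chi\in(\frac1{\pi_0},\infty)$: multiple optimal cycle lengths $T^*=\frac1{j_2}\frac LW$ for positive integers $j_2$ with $(K-k_0)W\le(1-\frac{2\delta}{T^*})\pi_0C$.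
   Context: Signalized ring road of length $L>0$ with LWR traffic, triangular fundamental diagram $Q(k)=\min\{Vk,(K-k)W\}$, $\bar K=\frac{W}{V+W}K$, $C=V\bar K$, average density $k_0\in[0,K]$, pretimed two-phase signal with cycle length $T$. With a start-up lost time $\delta>0$ per phase and a fixed allocation ratio $\pi_0\in(0,1)$, the effective green ratio is $\pi=(1-\frac{2\delta}T)\pi_0$, $T\ge2\delta$. In stationary states the average flow-rate is $\bar g=\min\{\phi_1,\pi C,\phi_2\}$ with $\phi_1=\frac{k_0}{k_1}\pi C$, $\phi_2=\frac{K-k_0}{K-k_2}\pi C$, where $\frac LV=(j_1+\alpha_1)T$, $j_1=\lfloor L/(VT)\rfloor$, $0\le\alpha_1<1$, $\frac LW=(j_2+\alpha_2)T$, $j_2=\lfloor L/(WT)\rfloor$, $0\le\alpha_2<1$, $k_1=\frac{j_1+\min\{\alpha_1/\pi,1\}}{j_1+\alpha_1}\pi\bar K$, $k_2=K-\frac{j_2+\min\{\alpha_2/\pi,1\}}{j_2+\alpha_2}\pi\frac CW$. Assuming $L/V$ and $L/W$ are much larger than $2\delta$, $\pi$ is replaced by $\pi_0$ in $\phi_1,\phi_2$ (but not in the term $\pi C=(1-\frac{2\delta}T)\pi_0C$); an optimal cycle length is a maximizer over $T\ge2\delta$ of $\min\{\phi_1,(1-\frac{2\delta}T)\pi_0C,\phi_2\}$. *)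

theory Defs
  imports "HOL-Analysis.Analysis"
begin

text \<open>Signalized ring road, triangular fundamental diagram. Parameters:
  free-flow speed V, shock-wave speed W, jam density K, average density k0,
  ring length L, start-up lost time delta, allocation ratio pi0, cycle length T.\<close>

definition Kbar :: "real \<Rightarrow> real \<Rightarrow> real \<Rightarrow> real" where
  "Kbar V W K = W / (V + W) * K"

definition Cap :: "real \<Rightarrow> real \<Rightarrow> real \<Rightarrow> real" where
  "Cap V W K = V * Kbar V W K"

definition jj :: "real \<Rightarrow> real \<Rightarrow> real \<Rightarrow> real" where
  "jj L U T = real_of_int \<lfloor>L / (U * T)\<rfloor>"

definition alph :: "real \<Rightarrow> real \<Rightarrow> real \<Rightarrow> real" where
  "alph L U T = L / (U * T) - jj L U T"

text \<open>k1 and k2 with pi replaced by pi0 (as in the approximation of the paper).\<close>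
definition k1 :: "real \<Rightarrow> real \<Rightarrow> real \<Rightarrow> real \<Rightarrow> real \<Rightarrow> real \<Rightarrow> real" where
  "k1 V W K L pi0 T =
     (jj L V T + min (alph L V T / pi0) 1) / (jj L V T + alph L V T) * pi0 * Kbar V W K"

definition k2 :: "real \<Rightarrow> real \<Rightarrow> real \<Rightarrow> real \<Rightarrow> real \<Rightarrow> real \<Rightarrow> real" where
  "k2 V W K L pi0 T =
     K - (jj L W T + min (alph L W T / pi0) 1) / (jj L W T + alph L W T) * pi0 * (Cap V W K / W)"

definition phi1 :: "real \<Rightarrow> real \<Rightarrow> real \<Rightarrow> real \<Rightarrow> real \<Rightarrow> real \<Rightarrow> real \<Rightarrow> real" where
  "phi1 V W K k0 L pi0 T = k0 / k1 V W K L pi0 T * pi0 * Cap V W K"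

definition phi2 :: "real \<Rightarrow> real \<Rightarrow> real \<Rightarrow> real \<Rightarrow> real \<Rightarrow> real \<Rightarrow> real \<Rightarrow> real" where
  "phi2 V W K k0 L pi0 T = (K - k0) / (K - k2 V W K L pi0 T) * pi0 * Cap V W K"

text \<open>Objective: average flow-rate as a function of the cycle length T.\<close>
definition objective :: "real \<Rightarrow> real \<Rightarrow> real \<Rightarrow> real \<Rightarrow> real \<Rightarrow> real \<Rightarrow> real \<Rightarrow> real \<Rightarrow> real" where
  "objective V W K k0 L \<delta> pi0 T =
     min (min (phi1 V W K k0 L pi0 T) ((1 - 2 * \<delta> / T) * pi0 * Cap V W K))
         (phi2 V W K k0 L pi0 T)"

definition optimal_cycle :: "real \<Rightarrow> real \<Rightarrow> real \<Rightarrow> real \<Rightarrow> real \<Rightarrow> real \<Rightarrow> real \<Rightarrow> real \<Rightarrow> bool" where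
  "optimal_cycle V W K k0 L \<delta> pi0 T \<longleftrightarrow>
     2 * \<delta> \<le> T \<and> (\<forall>T'. 2 * \<delta> \<le> T' \<longrightarrow> objective V W K k0 L \<delta> pi0 T' \<le> objective V W K k0 L \<delta> pi0 T)"

definition congestion :: "real \<Rightarrow> real \<Rightarrow> real \<Rightarrow> real \<Rightarrow> real" where
  "congestion V W K k0 = min (V * k0) (Cap V W K) / min (Cap V W K) ((K - k0) * W)"

end

theory Submission
  imports Defs
begin

text \<open>Away from the critical density one of the two wave constraints never binds: for
  k0 < Kbar the objective is min (V k0 F(L/(V T))) ((1 - 2 delta/T) pi0 C), where the factor
  F lies in [pi0, 1], equals 1 exactly when L/(V T) is an integer and equals max pi0 x for
  x = L/(V T) < 1. If V k0 < pi0 C the value V k0 is attained exactly at the harmonic cycle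
  lengths L/(j V) that leave enough green time, and T = L/V is one of them once L is large.
  Otherwise the lost-time term, increasing in T, meets the wave term V k0 L/(V T), decreasing
  in T, at T = chi L/(pi0 V) + 2 delta, which for large L lies where pi0 < L/(V T) < 1 and is
  the unique maximizer. Dense traffic is symmetric with W and (K - k0) W in place of V and V k0.
  At the critical density the objective is (1 - 2 delta/T) pi0 C, strictly increasing in T.\<close>

lemma is_arg_max_set_cong:
  "(\<And>x. P x \<Longrightarrow> f x = g x) \<Longrightarrow> {x. is_arg_max f P x} = {x. is_arg_max g P x}"
  by (auto simp: is_arg_max_def)

lemma is_arg_max_set_eq_singleton:
  fixes f :: "'a \<Rightarrow> 'b::linorder"
  assumes "P x" "\<And>y. P y \<Longrightarrow> y \<noteq> x \<Longrightarrow> f y < f x"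
  shows "{y. is_arg_max f P y} = {x}"
  using assms by (auto simp: is_arg_max_linorder dest: leD intro: less_imp_le)

lemma is_arg_max_set_strict_mono_on_empty:
  fixes f :: "real \<Rightarrow> 'b::linorder"
  assumes "strict_mono_on {a..} f"
  shows "{x. is_arg_max f (\<lambda>x. a \<le> x) x} = {}"
proof (rule equals0I, unfold mem_Collect_eq)
  fix x
  assume "is_arg_max f (\<lambda>x. a \<le> x) x"
  moreover from this have "f x < f (x + 1)"
    by (intro strict_mono_onD[OF assms]) (simp_all add: is_arg_max_def)
  ultimately show False by (simp add: is_arg_max_linorder not_le[symmetric])
qed

lemma tendsto_SUP_mono_on_at_top:
  fixes f :: "real \<Rightarrow> real"
  assumes "mono_on {a..} f" "(f \<longlongrightarrow> l) at_top"
  shows "(f \<longlongrightarrow> (SUP x\<in>{a..}. f x)) at_top"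
proof -
  have le_l: "f x \<le> l" if "a \<le> x" for x
  proof (rule tendsto_lowerbound[OF assms(2)])
    show "\<forall>\<^sub>F y in at_top. f x \<le> f y"
      using eventually_ge_at_top[of x]
      by eventually_elim (use assms(1) that in \<open>auto intro: mono_onD\<close>)
  qed simp
  then have bdd: "bdd_above (f ` {a..})" by (meson atLeast_iff bdd_aboveI2)
  have "(SUP x\<in>{a..}. f x) = l"
  proof (rule antisym)
    show "(SUP x\<in>{a..}. f x) \<le> l" by (rule cSUP_least) (auto simp: le_l)
    show "l \<le> (SUP x\<in>{a..}. f x)"
    proof (rule tendsto_upperbound[OF assms(2)])
      show "\<forall>\<^sub>F y in at_top. f y \<le> (SUP x\<in>{a..}. f x)"
        using eventually_ge_at_top[of a] by eventually_elim (auto intro: cSUP_upper[OF _ bdd])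
    qed simp
  qed
  with assms(2) show ?thesis by simp
qed

text \<open>With x = L/(U T) = j + alpha as in k1 and k2, this is x / (j + min (alpha/p) 1).\<close>

definition wave_factor :: "real \<Rightarrow> real \<Rightarrow> real" where
  "wave_factor p x = x / (of_int \<lfloor>x\<rfloor> + min (frac x / p) 1)"

lemma wave_factor_denominator_pos:
  fixes x p :: real
  assumes "0 < x" "0 < p"
  shows "0 < of_int \<lfloor>x\<rfloor> + min (frac x / p) 1"
proof (cases "x < 1")
  case True
  then have "\<lfloor>x\<rfloor> = 0" "frac x = x" using assms by (simp_all add: floor_eq_iff frac_eq)
  then show ?thesis using assms by simp
next
  case False
  then have "1 \<le> \<lfloor>x\<rfloor>" by (simp add: le_floor_iff)
  moreover have "0 \<le> min (frac x / p) 1" using assms by simp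
  ultimately show ?thesis by linarith
qed

lemma wave_factor_le_1:
  assumes "0 < x" "0 < p" "p \<le> 1"
  shows "wave_factor p x \<le> 1"
proof -
  have "frac x \<le> frac x / p" using assms by (simp add: le_divide_eq mult_left_le)
  then have "x \<le> of_int \<lfloor>x\<rfloor> + min (frac x / p) 1" using frac_lt_1[of x] by (simp add: frac_def)
  then show ?thesis
    using wave_factor_denominator_pos[OF assms(1,2)] by (simp add: wave_factor_def)
qed

lemma wave_factor_ge:
  assumes "0 < x" "0 < p" "p \<le> 1"
  shows "p \<le> wave_factor p x"
proof -
  have "p * of_int \<lfloor>x\<rfloor> \<le> of_int \<lfloor>x\<rfloor>"
    using assms by (simp add: mult_left_le_one_le)
  moreover have "p * min (frac x / p) 1 = min (frac x) p" using assms by (simp add: min_def)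
  ultimately have "p * (of_int \<lfloor>x\<rfloor> + min (frac x / p) 1) \<le> x"
    by (simp add: distrib_left frac_def)
  then show ?thesis
    using wave_factor_denominator_pos[OF assms(1,2)] by (simp add: wave_factor_def le_divide_eq)
qed

lemma wave_factor_eq_1_iff:
  assumes "0 < x" "0 < p" "p < 1"
  shows "wave_factor p x = 1 \<longleftrightarrow> x \<in> \<int>"
proof -
  have "wave_factor p x = 1 \<longleftrightarrow> frac x = min (frac x / p) 1"
    using wave_factor_denominator_pos[OF assms(1,2)] by (auto simp: wave_factor_def frac_def)
  also have "\<dots> \<longleftrightarrow> frac x = 0"
  proof
    assume "frac x = min (frac x / p) 1"
    moreover have "frac x > 0 \<Longrightarrow> frac x < frac x / p" using assms by (simp add: less_divide_eq)
    ultimately show "frac x = 0" using frac_lt_1[of x] frac_ge_0[of x] by linarith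
  qed (auto elim: Ints_cases)
  finally show ?thesis by simp
qed

lemma wave_factor_below_1:
  assumes "0 < x" "x < 1" "0 < p"
  shows "wave_factor p x = max p x"
proof -
  have "\<lfloor>x\<rfloor> = 0" "frac x = x" using assms by (simp_all add: floor_eq_iff frac_eq)
  then show ?thesis
    using assms by (cases "x \<le> p") (simp_all add: wave_factor_def min_def max_def field_simps)
qed

lemma Kbar_pos: "0 < V \<Longrightarrow> 0 < W \<Longrightarrow> 0 < K \<Longrightarrow> 0 < Kbar V W K"
  by (simp add: Kbar_def)

lemma Cap_pos: "0 < V \<Longrightarrow> 0 < W \<Longrightarrow> 0 < K \<Longrightarrow> 0 < Cap V W K"
  by (simp add: Cap_def Kbar_pos)

lemma Cap_eq_congested_branch: "0 < V \<Longrightarrow> 0 < W \<Longrightarrow> Cap V W K = W * (K - Kbar V W K)"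
  by (simp add: Cap_def Kbar_def field_simps)

lemma free_flow_less_Cap_iff: "0 < V \<Longrightarrow> V * k0 < Cap V W K \<longleftrightarrow> k0 < Kbar V W K"
  by (simp add: Cap_def)

lemma Cap_less_congested_flow_iff:
  "0 < V \<Longrightarrow> 0 < W \<Longrightarrow> Cap V W K < (K - k0) * W \<longleftrightarrow> k0 < Kbar V W K"
  by (simp add: Cap_eq_congested_branch algebra_simps)

lemma congested_flow_less_Cap_iff:
  "0 < V \<Longrightarrow> 0 < W \<Longrightarrow> (K - k0) * W < Cap V W K \<longleftrightarrow> Kbar V W K < k0"
  by (simp add: Cap_eq_congested_branch algebra_simps)

lemma phi1_eq_wave_factor:
  assumes "0 < V" "0 < W" "0 < K" "0 < L" "0 < T" "0 < p"
  shows "phi1 V W K k0 L p T = V * k0 * wave_factor p (L / (V * T))"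
proof -
  define x where "x = L / (V * T)"
  define D where "D = of_int \<lfloor>x\<rfloor> + min (frac x / p) 1"
  have "0 < x" "0 < D"
    using assms wave_factor_denominator_pos[of x p] by (simp_all add: x_def D_def)
  have "phi1 V W K k0 L p T = k0 / (D / x * p * Kbar V W K) * p * (V * Kbar V W K)"
    by (simp add: phi1_def Cap_def k1_def jj_def alph_def frac_def x_def D_def)
  also have "\<dots> = V * k0 * (x / D)"
    using \<open>0 < x\<close> \<open>0 < D\<close> Kbar_pos[OF assms(1-3)] \<open>0 < p\<close> by (simp add: field_simps)
  finally show ?thesis by (simp add: wave_factor_def x_def D_def)
qed

lemma phi2_eq_wave_factor:
  assumes "0 < V" "0 < W" "0 < K" "0 < L" "0 < T" "0 < p"
  shows "phi2 V W K k0 L p T = (K - k0) * W * wave_factor p (L / (W * T))"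
proof -
  define x where "x = L / (W * T)"
  define D where "D = of_int \<lfloor>x\<rfloor> + min (frac x / p) 1"
  have "0 < x" "0 < D"
    using assms wave_factor_denominator_pos[of x p] by (simp_all add: x_def D_def)
  have "phi2 V W K k0 L p T = (K - k0) / (D / x * p * (Cap V W K / W)) * p * Cap V W K"
    by (simp add: phi2_def k2_def jj_def alph_def frac_def x_def D_def)
  also have "\<dots> = (K - k0) * W * (x / D)"
    using \<open>0 < x\<close> \<open>0 < D\<close> Cap_pos[OF assms(1-3)] \<open>0 < p\<close> \<open>0 < W\<close> by (simp add: field_simps)
  finally show ?thesis by (simp add: wave_factor_def x_def D_def)
qed

text \<open>The objective with the non-binding wave constraint dropped: (A, U) is (V k0, V) below the
  critical density and ((K - k0) W, W) above it.\<close>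

definition reduced_objective :: "real \<Rightarrow> real \<Rightarrow> real \<Rightarrow> real \<Rightarrow> real \<Rightarrow> real \<Rightarrow> real \<Rightarrow> real" where
  "reduced_objective A U C L \<delta> p T = min (A * wave_factor p (L / (U * T))) ((1 - 2 * \<delta> / T) * p * C)"

lemma effective_capacity_le:
  fixes \<delta> p C T :: real
  assumes "2 * \<delta> \<le> T" "0 < \<delta>" "0 \<le> p * C"
  shows "(1 - 2 * \<delta> / T) * p * C \<le> p * C"
proof -
  have "0 \<le> 2 * \<delta> / T * (p * C)" using assms by simp
  then show ?thesis by (simp add: algebra_simps)
qed

lemma effective_capacity_le_wave_flow:
  assumes "C \<le> A" "0 < C" "0 < x" "0 < p" "p \<le> 1" "2 * \<delta> \<le> T" "0 < \<delta>"
  shows "(1 - 2 * \<delta> / T) * p * C \<le> A * wave_factor p x"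
proof -
  have "(1 - 2 * \<delta> / T) * p * C \<le> p * C" using assms by (intro effective_capacity_le) simp_all
  also have "\<dots> \<le> wave_factor p x * A"
    using assms wave_factor_ge[OF assms(3-5)] by (intro mult_mono) simp_all
  finally show ?thesis by (simp add: mult.commute)
qed

lemma objective_eq_reduced_sparse:
  assumes "0 < V" "0 < W" "0 < K" "0 < L" "0 < \<delta>" "0 < p" "p < 1" "2 * \<delta> \<le> T"
    and "k0 \<le> Kbar V W K"
  shows "objective V W K k0 L \<delta> p T = reduced_objective (V * k0) V (Cap V W K) L \<delta> p T"
proof -
  have "0 < T" using assms by linarith
  have "W * k0 \<le> W * Kbar V W K" using assms by simp
  then have "Cap V W K \<le> (K - k0) * W"
    using Cap_eq_congested_branch[OF assms(1,2), of K] by (simp add: algebra_simps)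
  then have "(1 - 2 * \<delta> / T) * p * Cap V W K \<le> phi2 V W K k0 L p T"
    using assms \<open>0 < T\<close> Cap_pos[OF assms(1-3)]
    by (simp add: phi2_eq_wave_factor effective_capacity_le_wave_flow)
  then show ?thesis
    using assms \<open>0 < T\<close>
    by (simp add: objective_def reduced_objective_def phi1_eq_wave_factor min_def)
qed

lemma objective_eq_reduced_dense:
  assumes "0 < V" "0 < W" "0 < K" "0 < L" "0 < \<delta>" "0 < p" "p < 1" "2 * \<delta> \<le> T"
    and "Kbar V W K \<le> k0"
  shows "objective V W K k0 L \<delta> p T = reduced_objective ((K - k0) * W) W (Cap V W K) L \<delta> p T"
proof -
  have "0 < T" using assms by linarith
  have "Cap V W K \<le> V * k0" using assms by (simp add: Cap_def)
  then have "(1 - 2 * \<delta> / T) * p * Cap V W K \<le> phi1 V W K k0 L p T"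
    using assms \<open>0 < T\<close> Cap_pos[OF assms(1-3)]
    by (simp add: phi1_eq_wave_factor effective_capacity_le_wave_flow)
  then show ?thesis
    using assms \<open>0 < T\<close>
    by (simp add: objective_def reduced_objective_def phi2_eq_wave_factor min_def)
qed

lemma harmonic_cycle_of_wave_factor_eq_1:
  assumes "0 < U" "0 < L" "0 < T" "0 < p" "p < 1" "wave_factor p (L / (U * T)) = 1"
  obtains j :: nat where "0 < j" "T = L / (real j * U)"
proof -
  have "L / (U * T) \<in> \<int>" using assms by (simp add: wave_factor_eq_1_iff)
  then obtain n where n: "L / (U * T) = of_int n" by (elim Ints_cases)
  moreover have "0 < L / (U * T)" using assms by simp
  ultimately have "0 < n" by simp
  have "T = L / (real (nat n) * U)"
    using n \<open>0 < n\<close> assms(1,3) by (simp add: field_simps)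
  with \<open>0 < n\<close> show thesis by (intro that[of "nat n"]) simp_all
qed

lemma reduced_objective_maximizers_harmonic:
  assumes "0 < U" "0 < L" "0 < A" "0 < C" "0 < p" "p < 1" "0 < \<delta>"
    and longest_feasible: "A \<le> (1 - 2 * \<delta> / (L / U)) * p * C"
  shows "{T. is_arg_max (reduced_objective A U C L \<delta> p) (\<lambda>T. 2 * \<delta> \<le> T) T} =
    {T. \<exists>j::nat. 0 < j \<and> T = L / (real j * U) \<and> A \<le> (1 - 2 * \<delta> / T) * p * C}"
    (is "_ = {T. ?harmonic T}")
proof -
  let ?f = "reduced_objective A U C L \<delta> p"
  have le_A: "?f T \<le> A" if "2 * \<delta> \<le> T" for T
  proof -
    have "wave_factor p (L / (U * T)) \<le> 1"
      using that assms by (intro wave_factor_le_1) simp_all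
    then show ?thesis
      using \<open>0 < A\<close> by (simp add: reduced_objective_def min.coboundedI1 mult_left_le)
  qed
  have eq_A: "2 * \<delta> \<le> T \<and> ?f T = A" if harmonic: "?harmonic T" for T
  proof -
    obtain j :: nat where j: "0 < j" "T = L / (real j * U)" "A \<le> (1 - 2 * \<delta> / T) * p * C"
      using harmonic by blast
    have "0 < T" using j assms by simp
    have "0 < (1 - 2 * \<delta> / T) * (p * C)" using j(3) assms by (simp add: mult.assoc)
    moreover have "0 < p * C" using assms by simp
    ultimately have "2 * \<delta> / T < 1" by (simp add: zero_less_mult_iff)
    then have "2 * \<delta> \<le> T" using \<open>0 < T\<close> by (simp add: divide_less_eq)
    moreover have "wave_factor p (L / (U * T)) = 1"
      using j assms by (simp add: wave_factor_eq_1_iff)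
    ultimately show ?thesis using j(3) by (simp add: reduced_objective_def)
  qed
  show ?thesis
  proof (intro set_eqI iffI, unfold mem_Collect_eq)
    fix T
    assume max: "is_arg_max ?f (\<lambda>T. 2 * \<delta> \<le> T) T"
    then have "2 * \<delta> \<le> T" by (simp add: is_arg_max_def)
    have "2 * \<delta> \<le> L / U \<and> ?f (L / U) = A"
      by (rule eq_A, rule exI[of _ 1]) (use longest_feasible in simp)
    then have "A \<le> ?f T"
      using max by (metis is_arg_max_linorder)
    then have wave: "A \<le> A * wave_factor p (L / (U * T))" and feasible: "A \<le> (1 - 2 * \<delta> / T) * p * C"
      by (simp_all add: reduced_objective_def)
    have "0 < T" "0 < L / (U * T)"
      using \<open>2 * \<delta> \<le> T\<close> assms by simp_all
    then have "wave_factor p (L / (U * T)) = 1"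
      using wave \<open>0 < A\<close> wave_factor_le_1[of "L / (U * T)" p] \<open>0 < p\<close> \<open>p < 1\<close> by simp
    then obtain j :: nat where "0 < j" "T = L / (real j * U)"
      by (rule harmonic_cycle_of_wave_factor_eq_1[OF \<open>0 < U\<close> \<open>0 < L\<close> \<open>0 < T\<close> \<open>0 < p\<close> \<open>p < 1\<close>])
    then show "?harmonic T" using feasible by blast
  next
    fix T
    assume "?harmonic T"
    then show "is_arg_max ?f (\<lambda>T. 2 * \<delta> \<le> T) T"
      using eq_A le_A by (simp add: is_arg_max_linorder)
  qed
qed

lemma lost_time_meets_wave_flow:
  fixes U L A C p \<delta> :: real
  assumes "0 < U" "0 < L" "0 < A" "0 < C" "0 < p" "0 < \<delta>" "p * C \<le> A"
    and short_lost_time: "2 * \<delta> < (1 - A / C) * L / (p * U)"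
  defines "T0 \<equiv> A / C * L / (p * U) + 2 * \<delta>"
  shows "2 * \<delta> < T0" and "p < L / (U * T0)" and "L / (U * T0) < 1"
    and "(1 - 2 * \<delta> / T0) * p * C = A * (L / (U * T0))"
proof -
  show "2 * \<delta> < T0" using assms by (simp add: T0_def)
  then have "0 < T0" using assms by linarith
  have "L \<le> A / C * L / p"
    using assms by (simp add: field_simps mult_right_mono)
  moreover have "U * T0 = A / C * L / p + 2 * \<delta> * U"
    using assms by (simp add: T0_def field_simps)
  moreover have "0 < 2 * \<delta> * U" using assms by simp
  ultimately have "L < U * T0" by linarith
  then show "L / (U * T0) < 1"
    using assms \<open>0 < T0\<close> by simp
  have "2 * \<delta> * (p * U) < (1 - A / C) * L"
    using short_lost_time assms by (simp add: less_divide_eq)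
  moreover have "p * (U * T0) = A / C * L + 2 * \<delta> * (p * U)"
    using assms by (simp add: T0_def field_simps)
  ultimately have "p * (U * T0) < L" by (simp add: algebra_simps)
  then show "p < L / (U * T0)"
    using assms \<open>0 < T0\<close> by (simp add: less_divide_eq)
  have "T0 - 2 * \<delta> = A / C * L / (p * U)" by (simp add: T0_def)
  have "(1 - 2 * \<delta> / T0) * p * C = (T0 - 2 * \<delta>) * (p * C) / T0"
    using \<open>0 < T0\<close> by (simp add: field_simps)
  also have "\<dots> = A / C * L / (p * U) * (p * C) / T0"
    by (simp only: \<open>T0 - 2 * \<delta> = A / C * L / (p * U)\<close>)
  also have "\<dots> = A * (L / (U * T0))"
    using assms(1-6) \<open>0 < T0\<close> by (simp add: field_simps)
  finally show "(1 - 2 * \<delta> / T0) * p * C = A * (L / (U * T0))" .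
qed

lemma reduced_objective_maximizers_unique:
  assumes "0 < U" "0 < L" "0 < A" "0 < C" "0 < p" "p < 1" "0 < \<delta>"
    and "p * C \<le> A" and short_lost_time: "2 * \<delta> < (1 - A / C) * L / (p * U)"
  shows "{T. is_arg_max (reduced_objective A U C L \<delta> p) (\<lambda>T. 2 * \<delta> \<le> T) T} =
    {A / C * L / (p * U) + 2 * \<delta>}"
proof -
  let ?f = "reduced_objective A U C L \<delta> p"
  define T0 where "T0 = A / C * L / (p * U) + 2 * \<delta>"
  define x0 where "x0 = L / (U * T0)"
  note crossing = lost_time_meets_wave_flow[OF assms(1-5,7-9), folded T0_def x0_def]
  have "0 < T0" using crossing(1) assms by linarith
  have value_T0: "?f T0 = A * x0"
    using crossing assms by (simp add: reduced_objective_def wave_factor_below_1 x0_def)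
  have "?f T < A * x0" if "2 * \<delta> \<le> T" "T \<noteq> T0" for T
  proof (cases "T < T0")
    case True
    then have "2 * \<delta> / T0 < 2 * \<delta> / T"
      using that assms by (intro divide_strict_left_mono) simp_all
    then have "(1 - 2 * \<delta> / T) * p * C < (1 - 2 * \<delta> / T0) * p * C"
      using assms by simp
    then show ?thesis
      using crossing(4) by (simp add: reduced_objective_def)
  next
    case False
    then have "L / (U * T) < x0"
      using that assms \<open>0 < T0\<close> by (simp add: x0_def frac_less2)
    moreover have "0 < L / (U * T)"
      using that assms by simp
    ultimately have "wave_factor p (L / (U * T)) < x0"
      using crossing assms by (simp add: wave_factor_below_1)
    then show ?thesis
      using assms by (simp add: reduced_objective_def min.strict_coboundedI1)
  qed
  then show ?thesis
    using is_arg_max_set_eq_singleton[of "\<lambda>T. 2 * \<delta> \<le> T" T0 ?f] value_T0 crossing(1)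
    by (simp add: T0_def)
qed

lemma eventually_longest_cycle_feasible:
  fixes A U C p \<delta> :: real
  assumes "A < p * C"
  shows "\<forall>\<^sub>F L in at_top. A \<le> (1 - 2 * \<delta> / (L / U)) * p * C"
proof -
  have "((\<lambda>L. 2 * \<delta> * U / L) \<longlongrightarrow> 0) at_top"
    by (intro tendsto_divide_0[OF tendsto_const] filterlim_at_top_imp_at_infinity filterlim_ident)
  then have "((\<lambda>L. (1 - 2 * \<delta> / (L / U)) * p * C) \<longlongrightarrow> (1 - 0) * p * C) at_top"
    by (intro tendsto_intros) simp
  then have "\<forall>\<^sub>F L in at_top. A < (1 - 2 * \<delta> / (L / U)) * p * C"
    using assms by (intro order_tendstoD) simp
  then show ?thesis by (rule eventually_mono) simp
qed

lemma eventually_lost_time_short: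
  fixes A U C p \<delta> :: real
  assumes "A < C" "0 < C" "0 < p" "0 < U"
  shows "\<forall>\<^sub>F L in at_top. 2 * \<delta> < (1 - A / C) * L / (p * U)"
proof -
  define c where "c = (1 - A / C) / (p * U)"
  have "0 < c" using assms by (simp add: c_def)
  have eq: "(1 - A / C) * L / (p * U) = c * L" for L by (simp add: c_def)
  show ?thesis
    by (rule eventually_mono[OF eventually_gt_at_top[of "2 * \<delta> / c"]])
      (unfold eq, use \<open>0 < c\<close> in \<open>simp add: pos_divide_less_eq mult.commute\<close>)
qed

lemma congestion_sparse:
  assumes "0 < V" "0 < W" "k0 < Kbar V W K"
  shows "congestion V W K k0 = V * k0 / Cap V W K"
  using assms free_flow_less_Cap_iff[of V k0 W K] Cap_less_congested_flow_iff[of V W K k0]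
  by (simp add: congestion_def)

lemma congestion_dense:
  assumes "0 < V" "0 < W" "Kbar V W K < k0"
  shows "congestion V W K k0 = Cap V W K / ((K - k0) * W)"
  using assms free_flow_less_Cap_iff[of V k0 W K] Cap_less_congested_flow_iff[of V W K k0]
  by (simp add: congestion_def)

lemma congestion_critical:
  assumes "0 < V" "0 < W" "0 < K" "k0 = Kbar V W K"
  shows "congestion V W K k0 = 1"
  using assms Kbar_pos[OF assms(1-3)] Cap_eq_congested_branch[OF assms(1,2), of K]
  by (simp add: congestion_def Cap_def algebra_simps)

lemma optimal_cycles_eq_is_arg_max_set:
  "{T. optimal_cycle V W K k0 L \<delta> p T} = {T. is_arg_max (objective V W K k0 L \<delta> p) (\<lambda>T. 2 * \<delta> \<le> T) T}"
  by (auto simp: optimal_cycle_def is_arg_max_linorder)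

lemma optimal_cycles_sparse:
  assumes "0 < V" "0 < W" "0 < K" "0 < k0" "0 < \<delta>" "0 < p" "p < 1" "k0 < Kbar V W K"
  shows "\<forall>\<^sub>F L in at_top.
    (congestion V W K k0 < p \<longrightarrow>
       {T. optimal_cycle V W K k0 L \<delta> p T} =
       {T. \<exists>j::nat. 0 < j \<and> T = L / (real j * V) \<and> V * k0 \<le> (1 - 2 * \<delta> / T) * p * Cap V W K}) \<and>
    (p \<le> congestion V W K k0 \<longrightarrow>
       {T. optimal_cycle V W K k0 L \<delta> p T} = {congestion V W K k0 * L / (p * V) + 2 * \<delta>})"
proof -
  let ?C = "Cap V W K"
  have "0 < ?C" "0 < V * k0" "V * k0 < ?C"
    using assms by (simp_all add: Cap_pos free_flow_less_Cap_iff)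
  have chi: "congestion V W K k0 = V * k0 / ?C"
    using assms by (simp add: congestion_sparse)
  have optimal: "{T. optimal_cycle V W K k0 L \<delta> p T} =
      {T. is_arg_max (reduced_objective (V * k0) V ?C L \<delta> p) (\<lambda>T. 2 * \<delta> \<le> T) T}" if "0 < L" for L
    unfolding optimal_cycles_eq_is_arg_max_set
    using assms that by (intro is_arg_max_set_cong objective_eq_reduced_sparse) simp_all
  have harmonic: "\<forall>\<^sub>F L in at_top. congestion V W K k0 < p \<longrightarrow>
       {T. optimal_cycle V W K k0 L \<delta> p T} =
       {T. \<exists>j::nat. 0 < j \<and> T = L / (real j * V) \<and> V * k0 \<le> (1 - 2 * \<delta> / T) * p * ?C}"
  proof (cases "congestion V W K k0 < p")
    case True
    then have "V * k0 < p * ?C" using chi \<open>0 < ?C\<close> by (simp add: divide_less_eq mult.commute)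
    then have "\<forall>\<^sub>F L in at_top. V * k0 \<le> (1 - 2 * \<delta> / (L / V)) * p * ?C"
      by (rule eventually_longest_cycle_feasible)
    with eventually_gt_at_top[of 0] show ?thesis
    proof eventually_elim
      case (elim L)
      with reduced_objective_maximizers_harmonic[OF \<open>0 < V\<close> _ \<open>0 < V * k0\<close> \<open>0 < ?C\<close> \<open>0 < p\<close> \<open>p < 1\<close> \<open>0 < \<delta>\<close>]
      show ?case by (simp add: optimal)
    qed
  qed simp
  have unique: "\<forall>\<^sub>F L in at_top. p \<le> congestion V W K k0 \<longrightarrow>
       {T. optimal_cycle V W K k0 L \<delta> p T} = {congestion V W K k0 * L / (p * V) + 2 * \<delta>}"
  proof (cases "p \<le> congestion V W K k0")
    case True
    then have "p * ?C \<le> V * k0" using chi \<open>0 < ?C\<close> by (simp add: le_divide_eq mult.commute)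
    from eventually_gt_at_top[of 0]
      eventually_lost_time_short[OF \<open>V * k0 < ?C\<close> \<open>0 < ?C\<close> \<open>0 < p\<close> \<open>0 < V\<close>, of \<delta>]
    show ?thesis
    proof eventually_elim
      case (elim L)
      with reduced_objective_maximizers_unique[OF \<open>0 < V\<close> _ \<open>0 < V * k0\<close> \<open>0 < ?C\<close> \<open>0 < p\<close> \<open>p < 1\<close>
          \<open>0 < \<delta>\<close> \<open>p * ?C \<le> V * k0\<close>]
      show ?case by (simp add: optimal chi)
    qed
  qed simp
  show ?thesis using eventually_conj[OF harmonic unique] .
qed

lemma optimal_cycles_dense:
  assumes "0 < V" "0 < W" "0 < K" "k0 < K" "0 < \<delta>" "0 < p" "p < 1" "Kbar V W K < k0"
  shows "\<forall>\<^sub>F L in at_top.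
    (congestion V W K k0 \<le> 1 / p \<longrightarrow>
       {T. optimal_cycle V W K k0 L \<delta> p T} = {1 / congestion V W K k0 * L / (p * W) + 2 * \<delta>}) \<and>
    (1 / p < congestion V W K k0 \<longrightarrow>
       {T. optimal_cycle V W K k0 L \<delta> p T} =
       {T. \<exists>j::nat. 0 < j \<and> T = L / (real j * W) \<and> (K - k0) * W \<le> (1 - 2 * \<delta> / T) * p * Cap V W K})"
proof -
  let ?C = "Cap V W K" and ?A = "(K - k0) * W"
  have "0 < ?C" "0 < ?A" "?A < ?C"
    using assms by (simp_all add: Cap_pos congested_flow_less_Cap_iff)
  have chi: "congestion V W K k0 = ?C / ?A"
    using assms by (simp add: congestion_dense)
  have optimal: "{T. optimal_cycle V W K k0 L \<delta> p T} =
      {T. is_arg_max (reduced_objective ?A W ?C L \<delta> p) (\<lambda>T. 2 * \<delta> \<le> T) T}" if "0 < L" for L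
    unfolding optimal_cycles_eq_is_arg_max_set
    using assms that by (intro is_arg_max_set_cong objective_eq_reduced_dense) simp_all
  have unique: "\<forall>\<^sub>F L in at_top. congestion V W K k0 \<le> 1 / p \<longrightarrow>
       {T. optimal_cycle V W K k0 L \<delta> p T} = {1 / congestion V W K k0 * L / (p * W) + 2 * \<delta>}"
  proof (cases "congestion V W K k0 \<le> 1 / p")
    case True
    then have "p * ?C \<le> ?A" using chi \<open>0 < ?A\<close> \<open>0 < p\<close> by (simp add: field_simps)
    from eventually_gt_at_top[of 0]
      eventually_lost_time_short[OF \<open>?A < ?C\<close> \<open>0 < ?C\<close> \<open>0 < p\<close> \<open>0 < W\<close>, of \<delta>]
    show ?thesis
    proof eventually_elim
      case (elim L)
      with reduced_objective_maximizers_unique[OF \<open>0 < W\<close> _ \<open>0 < ?A\<close> \<open>0 < ?C\<close> \<open>0 < p\<close> \<open>p < 1\<close>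
          \<open>0 < \<delta>\<close> \<open>p * ?C \<le> ?A\<close>]
      show ?case by (simp add: optimal chi)
    qed
  qed simp
  have harmonic: "\<forall>\<^sub>F L in at_top. 1 / p < congestion V W K k0 \<longrightarrow>
       {T. optimal_cycle V W K k0 L \<delta> p T} =
       {T. \<exists>j::nat. 0 < j \<and> T = L / (real j * W) \<and> ?A \<le> (1 - 2 * \<delta> / T) * p * ?C}"
  proof (cases "1 / p < congestion V W K k0")
    case True
    then have "?A < p * ?C" using chi \<open>0 < ?A\<close> \<open>0 < p\<close> by (simp add: field_simps)
    then have "\<forall>\<^sub>F L in at_top. ?A \<le> (1 - 2 * \<delta> / (L / W)) * p * ?C"
      by (rule eventually_longest_cycle_feasible)
    with eventually_gt_at_top[of 0] show ?thesis
    proof eventually_elim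
      case (elim L)
      with reduced_objective_maximizers_harmonic[OF \<open>0 < W\<close> _ \<open>0 < ?A\<close> \<open>0 < ?C\<close> \<open>0 < p\<close> \<open>p < 1\<close> \<open>0 < \<delta>\<close>]
      show ?case by (simp add: optimal)
    qed
  qed simp
  show ?thesis using eventually_conj[OF unique harmonic] .
qed

lemma optimal_cycles_critical:
  assumes "0 < V" "0 < W" "0 < K" "0 < L" "0 < \<delta>" "0 < p" "p < 1" "k0 = Kbar V W K"
  shows "{T. optimal_cycle V W K k0 L \<delta> p T} = {}"
    and "(objective V W K k0 L \<delta> p \<longlongrightarrow> (SUP T\<in>{2 * \<delta>..}. objective V W K k0 L \<delta> p T)) at_top"
proof -
  let ?C = "Cap V W K"
  have "0 < ?C" using assms by (simp add: Cap_pos)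
  have effective_capacity: "objective V W K k0 L \<delta> p T = (1 - 2 * \<delta> / T) * p * ?C" if "2 * \<delta> \<le> T" for T
  proof -
    have "(1 - 2 * \<delta> / T) * p * ?C \<le> ?C * wave_factor p (L / (V * T))"
      using assms that \<open>0 < ?C\<close> by (intro effective_capacity_le_wave_flow) simp_all
    then show ?thesis
      using assms that objective_eq_reduced_sparse[of V W K L \<delta> p T k0]
      by (simp add: reduced_objective_def Cap_def)
  qed
  have "strict_mono_on {2 * \<delta>..} (objective V W K k0 L \<delta> p)"
  proof (rule strict_mono_onI)
    fix T T' assume "T \<in> {2 * \<delta>..}" "T' \<in> {2 * \<delta>..}" "T < T'"
    then have "2 * \<delta> / T' < 2 * \<delta> / T"
      using assms by (intro divide_strict_left_mono) auto
    then show "objective V W K k0 L \<delta> p T < objective V W K k0 L \<delta> p T'"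
      using \<open>T \<in> {2 * \<delta>..}\<close> \<open>T' \<in> {2 * \<delta>..}\<close> \<open>0 < ?C\<close> \<open>0 < p\<close> by (simp add: effective_capacity)
  qed
  then show "{T. optimal_cycle V W K k0 L \<delta> p T} = {}"
    by (simp add: optimal_cycles_eq_is_arg_max_set is_arg_max_set_strict_mono_on_empty)
  have "((\<lambda>T. 2 * \<delta> / T) \<longlongrightarrow> 0) at_top"
    by (intro tendsto_divide_0[OF tendsto_const] filterlim_at_top_imp_at_infinity filterlim_ident)
  then have "((\<lambda>T. (1 - 2 * \<delta> / T) * p * ?C) \<longlongrightarrow> (1 - 0) * p * ?C) at_top"
    by (intro tendsto_intros)
  moreover have "\<forall>\<^sub>F T in at_top. (1 - 2 * \<delta> / T) * p * ?C = objective V W K k0 L \<delta> p T"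
    using eventually_ge_at_top[of "2 * \<delta>"] by eventually_elim (simp add: effective_capacity)
  ultimately have "(objective V W K k0 L \<delta> p \<longlongrightarrow> (1 - 0) * p * ?C) at_top"
    by (rule Lim_transform_eventually)
  with \<open>strict_mono_on {2 * \<delta>..} (objective V W K k0 L \<delta> p)\<close>
  show "(objective V W K k0 L \<delta> p \<longlongrightarrow> (SUP T\<in>{2 * \<delta>..}. objective V W K k0 L \<delta> p T)) at_top"
    by (intro tendsto_SUP_mono_on_at_top strict_mono_on_imp_mono_on)
qed

theorem corollary4p2:
  fixes V W K k0 \<delta> pi0 :: real
  assumes "V > 0" and "W > 0" and "K > 0"
    and "0 < k0" and "k0 < K"
    and "\<delta> > 0"
    and "0 < pi0" and "pi0 < 1"
  shows "\<forall>\<^sub>F L in at_top.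
    (congestion V W K k0 < pi0 \<longrightarrow>
       {T. optimal_cycle V W K k0 L \<delta> pi0 T} =
       {T. \<exists>j::nat. j > 0 \<and> T = L / (real j * V) \<and>
             V * k0 \<le> (1 - 2 * \<delta> / T) * pi0 * Cap V W K}) \<and>
    (pi0 \<le> congestion V W K k0 \<and> congestion V W K k0 < 1 \<longrightarrow>
       {T. optimal_cycle V W K k0 L \<delta> pi0 T} =
       {congestion V W K k0 * L / (pi0 * V) + 2 * \<delta>}) \<and>
    (congestion V W K k0 = 1 \<longrightarrow>
       {T. optimal_cycle V W K k0 L \<delta> pi0 T} = {} \<and>
       ((\<lambda>T. objective V W K k0 L \<delta> pi0 T) \<longlongrightarrow>
          (SUP T\<in>{2 * \<delta>..}. objective V W K k0 L \<delta> pi0 T)) at_top) \<and>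
    (1 < congestion V W K k0 \<and> congestion V W K k0 \<le> 1 / pi0 \<longrightarrow>
       {T. optimal_cycle V W K k0 L \<delta> pi0 T} =
       {(1 / congestion V W K k0) * L / (pi0 * W) + 2 * \<delta>}) \<and>
    (1 / pi0 < congestion V W K k0 \<longrightarrow>
       {T. optimal_cycle V W K k0 L \<delta> pi0 T} =
       {T. \<exists>j::nat. j > 0 \<and> T = L / (real j * W) \<and>
             (K - k0) * W \<le> (1 - 2 * \<delta> / T) * pi0 * Cap V W K})"
proof -
  have "1 < 1 / pi0" using assms by simp
  consider (sparse) "k0 < Kbar V W K" | (critical) "k0 = Kbar V W K" | (dense) "Kbar V W K < k0"
    by linarith
  then show ?thesis
  proof cases
    case sparse
    then have "congestion V W K k0 < 1"
      using assms by (simp add: congestion_sparse Cap_pos free_flow_less_Cap_iff)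
    from optimal_cycles_sparse[OF assms(1-4,6-8) sparse] show ?thesis
      by (rule eventually_mono) (use \<open>congestion V W K k0 < 1\<close> \<open>1 < 1 / pi0\<close> in auto)
  next
    case critical
    then have "congestion V W K k0 = 1" using assms by (simp add: congestion_critical)
    from eventually_gt_at_top[of 0] show ?thesis
    proof eventually_elim
      case (elim L)
      with optimal_cycles_critical[OF assms(1-3) _ assms(6-8) critical] \<open>congestion V W K k0 = 1\<close>
      show ?case using \<open>1 < 1 / pi0\<close> assms by simp
    qed
  next
    case dense
    then have "1 < congestion V W K k0"
      using assms by (simp add: congestion_dense Cap_pos congested_flow_less_Cap_iff)
    from optimal_cycles_dense[OF assms(1-3,5-8) dense] show ?thesis
      by (rule eventually_mono) (use \<open>1 < congestion V W K k0\<close> \<open>pi0 < 1\<close> in auto)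
  qed
qed

end
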